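(* Let $(X,\tau)$ be a topological space and let $\delta_1,\delta_2$ be quasi-proximities compatible with $\tau$ such that $\delta_1$ is coarser than $\delta_2$ and both $\mathcal{V}_{\delta_1}$ and $\mathcal{V}_{\delta_2}$ are transitive. If $|\pi(\delta_1)\cap T(\tau)|>1$, then $|\pi(\delta_2)\cap T(\tau)|>1$.
   Context: Quasi-uniformities and quasi-proximities are in the sense of Fletcher–Lindgren. $\delta_1$ coarser than $\delta_2$ means that whenever $A\,\delta_2\,B$ then $A\,\delta_1\,B$ (equivalently $\mathcal{V}_{\delta_1}\subseteq\mathcal{V}_{\delta_2}$). $\pi(\delta)$ is the set of quasi-uniformities inducing $\delta$ and $\mathcal{V}_\delta$ is its coarsest (totally bounded) element. $T(\tau)$ is the set of quasi-uniformities compatible with $\tau$ that have a base of transitive entourages. *)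

theory Defs
  imports "HOL-Analysis.Analysis"
begin

definition quasi_uniformity :: "'a set \<Rightarrow> ('a \<times> 'a) set set \<Rightarrow> bool" where
  "quasi_uniformity X \<U> \<longleftrightarrow>
     \<U> \<noteq> {} \<and>
     (\<forall>U\<in>\<U>. U \<subseteq> X \<times> X \<and> Id_on X \<subseteq> U) \<and>
     (\<forall>U\<in>\<U>. \<forall>V. U \<subseteq> V \<and> V \<subseteq> X \<times> X \<longrightarrow> V \<in> \<U>) \<and>
     (\<forall>U\<in>\<U>. \<forall>V\<in>\<U>. U \<inter> V \<in> \<U>) \<and>
     (\<forall>U\<in>\<U>. \<exists>V\<in>\<U>. V O V \<subseteq> U)"

definition qu_compatible :: "'a topology \<Rightarrow> ('a \<times> 'a) set set \<Rightarrow> bool" where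
  "qu_compatible \<tau> \<U> \<longleftrightarrow>
     (\<forall>G. openin \<tau> G \<longleftrightarrow> G \<subseteq> topspace \<tau> \<and> (\<forall>x\<in>G. \<exists>U\<in>\<U>. U `` {x} \<subseteq> G))"

definition qu_transitive :: "('a \<times> 'a) set set \<Rightarrow> bool" where
  "qu_transitive \<U> \<longleftrightarrow> (\<forall>U\<in>\<U>. \<exists>W\<in>\<U>. W \<subseteq> U \<and> trans W)"

definition quasi_proximity :: "'a set \<Rightarrow> ('a set \<Rightarrow> 'a set \<Rightarrow> bool) \<Rightarrow> bool" where
  "quasi_proximity X \<delta> \<longleftrightarrow>
     (\<forall>A B C. A \<subseteq> X \<and> B \<subseteq> X \<and> C \<subseteq> X \<longrightarrow>
        (\<delta> A (B \<union> C) \<longleftrightarrow> \<delta> A B \<or> \<delta> A C) \<and>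
        (\<delta> (A \<union> B) C \<longleftrightarrow> \<delta> A C \<or> \<delta> B C)) \<and>
     (\<forall>A. A \<subseteq> X \<longrightarrow> \<not> \<delta> A {} \<and> \<not> \<delta> {} A) \<and>
     (\<forall>x\<in>X. \<delta> {x} {x}) \<and>
     (\<forall>A B. A \<subseteq> X \<and> B \<subseteq> X \<and> \<not> \<delta> A B \<longrightarrow>
        (\<exists>C. C \<subseteq> X \<and> \<not> \<delta> A C \<and> \<not> \<delta> (X - C) B))"

definition qp_compatible :: "'a topology \<Rightarrow> ('a set \<Rightarrow> 'a set \<Rightarrow> bool) \<Rightarrow> bool" where
  "qp_compatible \<tau> \<delta> \<longleftrightarrow>
     (\<forall>A. A \<subseteq> topspace \<tau> \<longrightarrow> \<tau> closure_of A = {x \<in> topspace \<tau>. \<delta> {x} A})"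

definition qprox_of :: "('a \<times> 'a) set set \<Rightarrow> 'a set \<Rightarrow> 'a set \<Rightarrow> bool" where
  "qprox_of \<U> A B \<longleftrightarrow> (\<forall>U\<in>\<U>. (A \<times> B) \<inter> U \<noteq> {})"

definition qp_coarser :: "'a set \<Rightarrow> ('a set \<Rightarrow> 'a set \<Rightarrow> bool) \<Rightarrow> ('a set \<Rightarrow> 'a set \<Rightarrow> bool) \<Rightarrow> bool" where
  "qp_coarser X \<delta>1 \<delta>2 \<longleftrightarrow> (\<forall>A B. A \<subseteq> X \<and> B \<subseteq> X \<and> \<delta>2 A B \<longrightarrow> \<delta>1 A B)"

definition qu_class :: "'a set \<Rightarrow> ('a set \<Rightarrow> 'a set \<Rightarrow> bool) \<Rightarrow> ('a \<times> 'a) set set set" where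
  "qu_class X \<delta> = {\<U>. quasi_uniformity X \<U> \<and>
      (\<forall>A B. A \<subseteq> X \<and> B \<subseteq> X \<longrightarrow> (qprox_of \<U> A B \<longleftrightarrow> \<delta> A B))}"

definition coarsest_qu :: "'a set \<Rightarrow> ('a set \<Rightarrow> 'a set \<Rightarrow> bool) \<Rightarrow> ('a \<times> 'a) set set" where
  "coarsest_qu X \<delta> = (THE \<V>. \<V> \<in> qu_class X \<delta> \<and> (\<forall>\<U>\<in>qu_class X \<delta>. \<V> \<subseteq> \<U>))"

definition trans_qus :: "'a topology \<Rightarrow> ('a \<times> 'a) set set set" where
  "trans_qus \<tau> = {\<U>. quasi_uniformity (topspace \<tau>) \<U> \<and> qu_compatible \<tau> \<U> \<and> qu_transitive \<U>}"

end

theory Submission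
  imports Defs
begin

text \<open>Pick \<U> \<in> \<pi>(\<delta>1) \<inter> T(\<tau>) different from, hence strictly finer than, \<V>_\<delta>1, and let
  \<W> = \<U> \<or> \<V>_\<delta>2. Every \<delta>2-near pair meets each entourage of \<U> (as \<delta>1 is coarser) and
  the finitely many rectangle complements generating an entourage of \<V>_\<delta>2 cannot
  separate it, so \<W> induces \<delta>2; being a join of transitive quasi-uniformities it is
  transitive, and it is compatible with \<tau> because \<delta>2 is. Finally \<W> \<noteq> \<V>_\<delta>2: otherwise
  \<U> \<subseteq> \<V>_\<delta>2 would be totally bounded, and a totally bounded quasi-uniformity
  inducing \<delta>1 is contained in \<V>_\<delta>1.\<close>

text \<open>The entourages X \<times> X - A \<times> B with A, B far form a subbase of \<V>_\<delta>; off_rects X F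
  is the intersection of finitely many of them.\<close>
definition off_rects :: "'a set \<Rightarrow> ('a set \<times> 'a set) set \<Rightarrow> ('a \<times> 'a) set" where
  "off_rects X F = X \<times> X - (\<Union>(A, B)\<in>F. A \<times> B)"

definition far_pairs :: "'a set \<Rightarrow> ('a set \<Rightarrow> 'a set \<Rightarrow> bool) \<Rightarrow> ('a set \<times> 'a set) set \<Rightarrow> bool" where
  "far_pairs X \<delta> F \<longleftrightarrow> finite F \<and> (\<forall>(A, B)\<in>F. A \<subseteq> X \<and> B \<subseteq> X \<and> \<not> \<delta> A B)"

definition qu_of_qprox :: "'a set \<Rightarrow> ('a set \<Rightarrow> 'a set \<Rightarrow> bool) \<Rightarrow> ('a \<times> 'a) set set" where
  "qu_of_qprox X \<delta> = {Z. Z \<subseteq> X \<times> X \<and> (\<exists>F. far_pairs X \<delta> F \<and> off_rects X F \<subseteq> Z)}"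

lemma off_rects_subset: "off_rects X F \<subseteq> X \<times> X"
  by (auto simp: off_rects_def)

lemma off_rectsI:
  "x \<in> X \<Longrightarrow> y \<in> X \<Longrightarrow> (\<And>A B. (A, B) \<in> F \<Longrightarrow> (x, y) \<notin> A \<times> B) \<Longrightarrow> (x, y) \<in> off_rects X F"
  unfolding off_rects_def by blast

lemma off_rects_empty [simp]: "off_rects X {} = X \<times> X"
  by (simp add: off_rects_def)

lemma off_rects_insert: "off_rects X (insert (A, B) F) = off_rects X F - A \<times> B"
  by (auto simp: off_rects_def)

lemma off_rects_Un: "off_rects X (F \<union> G) = off_rects X F \<inter> off_rects X G"
  by (auto simp: off_rects_def)

lemma off_rects_notin_rect: "(A, B) \<in> F \<Longrightarrow> (x, y) \<in> off_rects X F \<Longrightarrow> (x, y) \<notin> A \<times> B"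
  by (auto simp: off_rects_def)

lemma far_pairsD:
  assumes "far_pairs X \<delta> F" "(A, B) \<in> F"
  shows "A \<subseteq> X" "B \<subseteq> X" "\<not> \<delta> A B"
  using assms unfolding far_pairs_def by fastforce+

lemma far_pairs_Un: "far_pairs X \<delta> F \<Longrightarrow> far_pairs X \<delta> G \<Longrightarrow> far_pairs X \<delta> (F \<union> G)"
  by (auto simp: far_pairs_def)

lemma qu_subset: "quasi_uniformity X \<U> \<Longrightarrow> U \<in> \<U> \<Longrightarrow> U \<subseteq> X \<times> X"
  by (simp add: quasi_uniformity_def)

lemma qu_Id_on: "quasi_uniformity X \<U> \<Longrightarrow> U \<in> \<U> \<Longrightarrow> Id_on X \<subseteq> U"
  by (simp add: quasi_uniformity_def)

lemma qu_superset: "quasi_uniformity X \<U> \<Longrightarrow> U \<in> \<U> \<Longrightarrow> U \<subseteq> V \<Longrightarrow> V \<subseteq> X \<times> X \<Longrightarrow> V \<in> \<U>"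
  unfolding quasi_uniformity_def by blast

lemma qu_Int: "quasi_uniformity X \<U> \<Longrightarrow> U \<in> \<U> \<Longrightarrow> V \<in> \<U> \<Longrightarrow> U \<inter> V \<in> \<U>"
  unfolding quasi_uniformity_def by blast

lemma qu_comp: "quasi_uniformity X \<U> \<Longrightarrow> U \<in> \<U> \<Longrightarrow> \<exists>V\<in>\<U>. V O V \<subseteq> U"
  unfolding quasi_uniformity_def by blast

lemma qu_Times: "quasi_uniformity X \<U> \<Longrightarrow> X \<times> X \<in> \<U>"
  unfolding quasi_uniformity_def by blast

lemma qu_classD:
  assumes "\<U> \<in> qu_class X \<delta>"
  shows "quasi_uniformity X \<U>" and "A \<subseteq> X \<Longrightarrow> B \<subseteq> X \<Longrightarrow> qprox_of \<U> A B \<longleftrightarrow> \<delta> A B"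
  using assms by (auto simp: qu_class_def)

lemma qprox_of_antimono: "\<U> \<subseteq> \<V> \<Longrightarrow> qprox_of \<V> A B \<Longrightarrow> qprox_of \<U> A B"
  unfolding qprox_of_def by blast

lemma qp_Un_left:
  "quasi_proximity X \<delta> \<Longrightarrow> A \<subseteq> X \<Longrightarrow> B \<subseteq> X \<Longrightarrow> C \<subseteq> X \<Longrightarrow>
    \<delta> (A \<union> B) C \<longleftrightarrow> \<delta> A C \<or> \<delta> B C"
  unfolding quasi_proximity_def by blast

lemma qp_Un_right:
  "quasi_proximity X \<delta> \<Longrightarrow> A \<subseteq> X \<Longrightarrow> B \<subseteq> X \<Longrightarrow> C \<subseteq> X \<Longrightarrow>
    \<delta> A (B \<union> C) \<longleftrightarrow> \<delta> A B \<or> \<delta> A C"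
  unfolding quasi_proximity_def by blast

lemma qp_empty: "quasi_proximity X \<delta> \<Longrightarrow> A \<subseteq> X \<Longrightarrow> \<not> \<delta> A {} \<and> \<not> \<delta> {} A"
  unfolding quasi_proximity_def by simp

lemma qp_refl: "quasi_proximity X \<delta> \<Longrightarrow> x \<in> X \<Longrightarrow> \<delta> {x} {x}"
  unfolding quasi_proximity_def by simp

lemma qp_sep:
  "quasi_proximity X \<delta> \<Longrightarrow> A \<subseteq> X \<Longrightarrow> B \<subseteq> X \<Longrightarrow> \<not> \<delta> A B \<Longrightarrow>
    \<exists>C. C \<subseteq> X \<and> \<not> \<delta> A C \<and> \<not> \<delta> (X - C) B"
  unfolding quasi_proximity_def by simp

lemma qp_mono:
  assumes qp: "quasi_proximity X \<delta>" and "\<delta> A B" "A \<subseteq> A'" "B \<subseteq> B'" "A' \<subseteq> X" "B' \<subseteq> X"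
  shows "\<delta> A' B'"
proof -
  have "\<delta> (A \<union> A') B" using assms qp_Un_left[OF qp, of A A' B] by auto
  hence "\<delta> A' (B \<union> B')" using assms qp_Un_right[OF qp, of A' B B'] by (auto simp: Un_absorb1)
  thus ?thesis using assms by (simp add: Un_absorb1)
qed

lemma qp_split_left:
  assumes "quasi_proximity X \<delta>" "A \<subseteq> X" "B \<subseteq> X" "\<delta> A B"
  shows "\<delta> (A \<inter> C) B \<or> \<delta> (A - C) B"
proof -
  have "A = (A \<inter> C) \<union> (A - C)" by blast
  thus ?thesis using assms qp_Un_left[OF assms(1), of "A \<inter> C" "A - C" B] by auto
qed

lemma qp_split_right:
  assumes "quasi_proximity X \<delta>" "A \<subseteq> X" "B \<subseteq> X" "\<delta> A B"
  shows "\<delta> A (B \<inter> C) \<or> \<delta> A (B - C)"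
proof -
  have "B = (B \<inter> C) \<union> (B - C)" by blast
  thus ?thesis using assms qp_Un_right[OF assms(1), of A "B \<inter> C" "B - C"] by auto
qed

lemma qp_far_disjoint:
  assumes qp: "quasi_proximity X \<delta>" and "A \<subseteq> X" "B \<subseteq> X" "\<not> \<delta> A B"
  shows "A \<inter> B = {}"
proof (rule ccontr)
  assume "A \<inter> B \<noteq> {}"
  then obtain x where x: "x \<in> A" "x \<in> B" by blast
  hence "\<delta> {x} {x}" using qp_refl[OF qp] assms(2) by blast
  hence "\<delta> A B" using qp_mono[OF qp _ _ _ assms(2,3)] x by blast
  thus False using assms(4) by contradiction
qed

lemma far_pairs_off_rects_Id_on:
  assumes qp: "quasi_proximity X \<delta>" and F: "far_pairs X \<delta> F"
  shows "Id_on X \<subseteq> off_rects X F"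
proof
  fix z assume "z \<in> Id_on X"
  then obtain x where z: "z = (x, x)" "x \<in> X" by blast
  have "(x, x) \<notin> A \<times> B" if "(A, B) \<in> F" for A B
    using far_pairsD[OF F that] qp_far_disjoint[OF qp, of A B] by blast
  thus "z \<in> off_rects X F" unfolding z(1) by (rule off_rectsI[OF z(2) z(2)])
qed

lemma near_meets_Int_off_rects:
  assumes qp: "quasi_proximity X \<delta>" and F: "far_pairs X \<delta> F"
    and near_meets: "\<And>A B. A \<subseteq> X \<Longrightarrow> B \<subseteq> X \<Longrightarrow> \<delta> A B \<Longrightarrow> (A \<times> B) \<inter> U \<noteq> {}"
    and "A \<subseteq> X" "B \<subseteq> X" "\<delta> A B"
  shows "(A \<times> B) \<inter> (U \<inter> off_rects X F) \<noteq> {}"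
proof -
  have "finite F" using F by (simp add: far_pairs_def)
  thus ?thesis using F assms(4-6)
  proof (induction F arbitrary: A B rule: finite_induct)
    case empty
    have "(A \<times> B) \<inter> U \<noteq> {}" by (rule near_meets[OF empty.prems(2-4)])
    moreover have "(A \<times> B) \<inter> U \<subseteq> (A \<times> B) \<inter> (U \<inter> off_rects X {})"
      unfolding off_rects_empty using empty.prems(2,3) by blast
    ultimately show ?case by blast
  next
    case (insert p F)
    obtain A0 B0 where p: "p = (A0, B0)" by fastforce
    have "(A0, B0) \<in> insert p F" using p by simp
    note far = far_pairsD[OF insert.prems(1) this]
    have IH: "\<And>A B. A \<subseteq> X \<Longrightarrow> B \<subseteq> X \<Longrightarrow> \<delta> A B \<Longrightarrow> (A \<times> B) \<inter> (U \<inter> off_rects X F) \<noteq> {}"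
      using insert.IH insert.prems(1) by (simp add: far_pairs_def)
    have AB: "A \<subseteq> X" "B \<subseteq> X" "\<delta> A B" using insert.prems by auto
    hence sub: "A - A0 \<subseteq> X" "A \<inter> A0 \<subseteq> X" "B - B0 \<subseteq> X" by auto
    \<comment> \<open>Removing A0 \<times> B0 only deletes the piece (A \<inter> A0) \<times> (B \<inter> B0), which is far.\<close>
    have "\<not> \<delta> (A \<inter> A0) (B \<inter> B0)"
      using qp_mono[OF qp _ Int_lower2 Int_lower2 far(1,2)] far(3) by blast
    hence "\<delta> (A - A0) B \<or> \<delta> (A \<inter> A0) (B - B0)"
      using qp_split_left[OF qp AB, of A0] qp_split_right[OF qp sub(2) AB(2), of B0] by blast
    thus ?case
    proof
      assume "\<delta> (A - A0) B"
      from IH[OF sub(1) AB(2) this] show ?case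
        unfolding p off_rects_insert by blast
    next
      assume "\<delta> (A \<inter> A0) (B - B0)"
      from IH[OF sub(2,3) this] show ?case
        unfolding p off_rects_insert by blast
    qed
  qed
qed

text \<open>The separation axiom halves an entourage: split each far pair (A, B) along a set C
  with A far from C and X - C far from B.\<close>
lemma far_pairs_off_rects_comp:
  assumes qp: "quasi_proximity X \<delta>" and F: "far_pairs X \<delta> F"
  shows "\<exists>G. far_pairs X \<delta> G \<and> off_rects X G O off_rects X G \<subseteq> off_rects X F"
proof -
  have "\<exists>C. C \<subseteq> X \<and> \<not> \<delta> A C \<and> \<not> \<delta> (X - C) B" if "(A, B) \<in> F" for A B
    using far_pairsD[OF F that] qp_sep[OF qp] by blast
  then obtain c where c: "\<And>A B. (A, B) \<in> F \<Longrightarrow> c A B \<subseteq> X \<and> \<not> \<delta> A (c A B) \<and> \<not> \<delta> (X - c A B) B"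
    by metis
  define G where "G = (\<lambda>(A, B). (A, c A B)) ` F \<union> (\<lambda>(A, B). (X - c A B, B)) ` F"
  have "A' \<subseteq> X \<and> B' \<subseteq> X \<and> \<not> \<delta> A' B'" if "(A', B') \<in> G" for A' B'
  proof -
    obtain A B where AB: "(A, B) \<in> F"
      and "(A', B') = (A, c A B) \<or> (A', B') = (X - c A B, B)"
      using \<open>(A', B') \<in> G\<close> unfolding G_def by auto
    thus ?thesis using far_pairsD[OF F AB] c[OF AB] by auto
  qed
  moreover have "finite G" using F by (simp add: far_pairs_def G_def)
  ultimately have "far_pairs X \<delta> G" by (auto simp: far_pairs_def)
  moreover have "off_rects X G O off_rects X G \<subseteq> off_rects X F"
  proof (rule subrelI)
    fix x z assume "(x, z) \<in> off_rects X G O off_rects X G"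
    then obtain y where xy: "(x, y) \<in> off_rects X G" and yz: "(y, z) \<in> off_rects X G" by blast
    show "(x, z) \<in> off_rects X F"
    proof (rule ccontr)
      assume "(x, z) \<notin> off_rects X F"
      moreover have "x \<in> X" "y \<in> X" "z \<in> X" using xy yz off_rects_subset by blast+
      ultimately obtain A B where AB: "(A, B) \<in> F" "x \<in> A" "z \<in> B"
        using off_rectsI[of x X z F] by blast
      have G: "(A, c A B) \<in> G" "(X - c A B, B) \<in> G" using AB(1) by (auto simp: G_def)
      show False
      proof (cases "y \<in> c A B")
        case True
        thus False using off_rects_notin_rect[OF G(1) xy] AB(2) by blast
      next
        case False
        thus False using off_rects_notin_rect[OF G(2) yz] AB(3) \<open>y \<in> X\<close> by blast
      qed
    qed
  qed
  ultimately show ?thesis by blast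
qed

lemma qu_of_qproxI:
  "far_pairs X \<delta> F \<Longrightarrow> off_rects X F \<subseteq> Z \<Longrightarrow> Z \<subseteq> X \<times> X \<Longrightarrow> Z \<in> qu_of_qprox X \<delta>"
  unfolding qu_of_qprox_def by blast

lemma qu_of_qproxE:
  assumes "Z \<in> qu_of_qprox X \<delta>"
  obtains F where "far_pairs X \<delta> F" "off_rects X F \<subseteq> Z" "Z \<subseteq> X \<times> X"
  using assms unfolding qu_of_qprox_def by blast

lemma quasi_uniformity_qu_of_qprox:
  assumes qp: "quasi_proximity X \<delta>"
  shows "quasi_uniformity X (qu_of_qprox X \<delta>)"
  unfolding quasi_uniformity_def
proof (intro conjI ballI allI impI)
  have "far_pairs X \<delta> {}" by (simp add: far_pairs_def)
  thus "qu_of_qprox X \<delta> \<noteq> {}" using qu_of_qproxI[of X \<delta> "{}" "X \<times> X"] off_rects_subset by blast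
next
  fix Z assume "Z \<in> qu_of_qprox X \<delta>"
  then obtain F where F: "far_pairs X \<delta> F" "off_rects X F \<subseteq> Z" "Z \<subseteq> X \<times> X"
    by (rule qu_of_qproxE)
  thus "Z \<subseteq> X \<times> X" "Id_on X \<subseteq> Z" using far_pairs_off_rects_Id_on[OF qp F(1)] by auto
  fix Z' assume "Z \<subseteq> Z' \<and> Z' \<subseteq> X \<times> X"
  thus "Z' \<in> qu_of_qprox X \<delta>" using qu_of_qproxI[OF F(1)] F(2) by blast
next
  fix Z Z' assume "Z \<in> qu_of_qprox X \<delta>" "Z' \<in> qu_of_qprox X \<delta>"
  then obtain F F' where "far_pairs X \<delta> F" "off_rects X F \<subseteq> Z" "Z \<subseteq> X \<times> X"
    and "far_pairs X \<delta> F'" "off_rects X F' \<subseteq> Z'"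
    by (metis qu_of_qproxE)
  thus "Z \<inter> Z' \<in> qu_of_qprox X \<delta>"
    using qu_of_qproxI[OF far_pairs_Un, of X \<delta> F F' "Z \<inter> Z'"] off_rects_Un[of X F F'] by blast
next
  fix Z assume "Z \<in> qu_of_qprox X \<delta>"
  then obtain F where "far_pairs X \<delta> F" "off_rects X F \<subseteq> Z" by (rule qu_of_qproxE)
  then obtain G where G: "far_pairs X \<delta> G" "off_rects X G O off_rects X G \<subseteq> Z"
    using far_pairs_off_rects_comp[OF qp] by blast
  have "off_rects X G \<in> qu_of_qprox X \<delta>" using qu_of_qproxI[OF G(1) order_refl off_rects_subset] .
  thus "\<exists>W\<in>qu_of_qprox X \<delta>. W O W \<subseteq> Z" using G(2) by blast
qed

lemma qu_of_qprox_in_qu_class: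
  assumes qp: "quasi_proximity X \<delta>"
  shows "qu_of_qprox X \<delta> \<in> qu_class X \<delta>"
proof -
  have "qprox_of (qu_of_qprox X \<delta>) A B \<longleftrightarrow> \<delta> A B" if AB: "A \<subseteq> X" "B \<subseteq> X" for A B
  proof
    assume near: "qprox_of (qu_of_qprox X \<delta>) A B"
    show "\<delta> A B"
    proof (rule ccontr)
      assume "\<not> \<delta> A B"
      hence "far_pairs X \<delta> {(A, B)}" using AB by (simp add: far_pairs_def)
      hence "off_rects X {(A, B)} \<in> qu_of_qprox X \<delta>"
        by (rule qu_of_qproxI[OF _ order_refl off_rects_subset])
      moreover have "(A \<times> B) \<inter> off_rects X {(A, B)} = {}"
        using off_rects_notin_rect[of A B "{(A, B)}"] by fast
      ultimately show False using near unfolding qprox_of_def by blast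
    qed
  next
    assume "\<delta> A B"
    have "(A' \<times> B') \<inter> (X \<times> X) \<noteq> {}" if "A' \<subseteq> X" "B' \<subseteq> X" "\<delta> A' B'" for A' B'
    proof -
      have "A' \<noteq> {}" "B' \<noteq> {}"
        using qp_empty[OF qp that(1)] qp_empty[OF qp that(2)] that(3) by auto
      thus ?thesis using that(1,2) by blast
    qed
    hence meets: "(A \<times> B) \<inter> off_rects X F \<noteq> {}" if "far_pairs X \<delta> F" for F
      using near_meets_Int_off_rects[OF qp that, of "X \<times> X" A B] AB \<open>\<delta> A B\<close> by blast
    show "qprox_of (qu_of_qprox X \<delta>) A B"
      unfolding qprox_of_def
    proof
      fix Z assume "Z \<in> qu_of_qprox X \<delta>"
      then obtain F where "far_pairs X \<delta> F" "off_rects X F \<subseteq> Z" by (rule qu_of_qproxE)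
      thus "(A \<times> B) \<inter> Z \<noteq> {}" using meets by blast
    qed
  qed
  thus ?thesis using quasi_uniformity_qu_of_qprox[OF qp] by (simp add: qu_class_def)
qed

lemma off_rects_in_qu:
  assumes qu: "quasi_uniformity X \<U>" and "finite F"
    and "\<And>A B. (A, B) \<in> F \<Longrightarrow> X \<times> X - A \<times> B \<in> \<U>"
  shows "off_rects X F \<in> \<U>"
  using assms(2,3)
proof (induction F rule: finite_induct)
  case empty
  thus ?case using qu_Times[OF qu] by simp
next
  case (insert p F)
  obtain A B where p: "p = (A, B)" by fastforce
  have "off_rects X (insert p F) = off_rects X F \<inter> (X \<times> X - A \<times> B)"
    unfolding p off_rects_insert using off_rects_subset[of X F] by blast
  moreover have "off_rects X F \<in> \<U>" "X \<times> X - A \<times> B \<in> \<U>" using insert p by simp_all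
  ultimately show ?case using qu_Int[OF qu] by simp
qed

lemma qu_of_qprox_le:
  assumes "\<U> \<in> qu_class X \<delta>"
  shows "qu_of_qprox X \<delta> \<subseteq> \<U>"
proof
  fix Z assume "Z \<in> qu_of_qprox X \<delta>"
  then obtain F where F: "far_pairs X \<delta> F" "off_rects X F \<subseteq> Z" "Z \<subseteq> X \<times> X"
    by (rule qu_of_qproxE)
  note qu = qu_classD(1)[OF assms] and induces = qu_classD(2)[OF assms]
  have "X \<times> X - A \<times> B \<in> \<U>" if "(A, B) \<in> F" for A B
  proof -
    note far = far_pairsD[OF F(1) that]
    hence "\<not> qprox_of \<U> A B" using induces by blast
    then obtain U where U: "U \<in> \<U>" "(A \<times> B) \<inter> U = {}"
      unfolding qprox_of_def by blast
    hence "U \<subseteq> X \<times> X - A \<times> B" using qu_subset[OF qu] by blast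
    thus ?thesis using qu_superset[OF qu U(1)] by blast
  qed
  moreover have "finite F" using F(1) by (simp add: far_pairs_def)
  ultimately have "off_rects X F \<in> \<U>" using off_rects_in_qu[OF qu] by blast
  thus "Z \<in> \<U>" using qu_superset[OF qu _ F(2,3)] by blast
qed

lemma coarsest_qu_eq:
  assumes "quasi_proximity X \<delta>"
  shows "coarsest_qu X \<delta> = qu_of_qprox X \<delta>"
  unfolding coarsest_qu_def
  using qu_of_qprox_in_qu_class[OF assms] qu_of_qprox_le
  by (intro the_equality) blast+

definition totally_bounded_qu :: "'a set \<Rightarrow> ('a \<times> 'a) set set \<Rightarrow> bool" where
  "totally_bounded_qu X \<U> \<longleftrightarrow>
     (\<forall>U\<in>\<U>. \<exists>\<C>. finite \<C> \<and> \<Union>\<C> = X \<and> (\<forall>C\<in>\<C>. C \<times> C \<subseteq> U))"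

lemma totally_bounded_qu_subset:
  "\<U> \<subseteq> \<V> \<Longrightarrow> totally_bounded_qu X \<V> \<Longrightarrow> totally_bounded_qu X \<U>"
  unfolding totally_bounded_qu_def by blast

lemma qu_of_qprox_totally_bounded:
  assumes qp: "quasi_proximity X \<delta>"
  shows "totally_bounded_qu X (qu_of_qprox X \<delta>)"
  unfolding totally_bounded_qu_def
proof
  fix Z assume "Z \<in> qu_of_qprox X \<delta>"
  then obtain F where F: "far_pairs X \<delta> F" "off_rects X F \<subseteq> Z" by (rule qu_of_qproxE)
  define cell where "cell S = {x \<in> X. \<forall>p\<in>F. x \<in> fst p \<longleftrightarrow> p \<in> S}" for S
  have cell_iff: "x \<in> A \<longleftrightarrow> (A, B) \<in> S" if "x \<in> cell S" "(A, B) \<in> F" for x A B S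
    using that unfolding cell_def by (metis (mono_tags, lifting) fst_conv mem_Collect_eq)
  define \<C> where "\<C> = cell ` Pow F"
  have "finite \<C>" using F(1) by (simp add: far_pairs_def \<C>_def)
  moreover have "\<Union>\<C> = X"
  proof
    show "\<Union>\<C> \<subseteq> X" by (auto simp: \<C>_def cell_def)
    show "X \<subseteq> \<Union>\<C>"
    proof
      fix x assume "x \<in> X"
      hence "x \<in> cell {p \<in> F. x \<in> fst p}" by (simp add: cell_def)
      moreover have "{p \<in> F. x \<in> fst p} \<in> Pow F" by blast
      ultimately show "x \<in> \<Union>\<C>" unfolding \<C>_def by (rule UN_I[rotated])
    qed
  qed
  moreover have "\<forall>C\<in>\<C>. C \<times> C \<subseteq> Z"
  proof
    fix C assume "C \<in> \<C>"
    then obtain S where C: "C = cell S" unfolding \<C>_def by blast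
    have disj: "(x, y) \<notin> A \<times> B" if "x \<in> C" "y \<in> C" "(A, B) \<in> F" for x y A B
    proof
      assume xy: "(x, y) \<in> A \<times> B"
      have "x \<in> cell S" "y \<in> cell S" using that(1,2) unfolding C .
      hence "y \<in> A \<inter> B" using cell_iff[OF _ that(3)] xy by blast
      thus False using qp_far_disjoint[OF qp far_pairsD[OF F(1) that(3)]] by blast
    qed
    have "C \<subseteq> X" unfolding C cell_def by blast
    have "C \<times> C \<subseteq> off_rects X F"
    proof (rule subrelI)
      fix x y assume "(x, y) \<in> C \<times> C"
      hence "x \<in> C" "y \<in> C" by auto
      thus "(x, y) \<in> off_rects X F"
        using off_rectsI[OF _ _ disj[OF \<open>x \<in> C\<close> \<open>y \<in> C\<close>]] \<open>C \<subseteq> X\<close> by blast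
    qed
    thus "C \<times> C \<subseteq> Z" using F(2) by blast
  qed
  ultimately show "\<exists>\<C>. finite \<C> \<and> \<Union>\<C> = X \<and> (\<forall>C\<in>\<C>. C \<times> C \<subseteq> Z)" by blast
qed

text \<open>For V O V \<subseteq> U and a finite V-small cover \<C>, the pairs (C, X - V``C) are far and
  the entourage they generate is contained in U.\<close>
lemma totally_bounded_le_qu_of_qprox:
  assumes \<U>: "\<U> \<in> qu_class X \<delta>" and tb: "totally_bounded_qu X \<U>"
  shows "\<U> \<subseteq> qu_of_qprox X \<delta>"
proof
  fix U assume "U \<in> \<U>"
  note qu = qu_classD(1)[OF \<U>] and induces = qu_classD(2)[OF \<U>]
  obtain V where V: "V \<in> \<U>" "V O V \<subseteq> U" using qu_comp[OF qu \<open>U \<in> \<U>\<close>] by blast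
  obtain \<C> where \<C>: "finite \<C>" "\<Union>\<C> = X" "\<forall>C\<in>\<C>. C \<times> C \<subseteq> V"
    using tb V(1) unfolding totally_bounded_qu_def by meson
  define G where "G = (\<lambda>C. (C, X - V `` C)) ` \<C>"
  have "far_pairs X \<delta> G"
  proof -
    have "\<not> \<delta> C (X - V `` C)" if "C \<in> \<C>" for C
    proof -
      have "(C \<times> (X - V `` C)) \<inter> V = {}" by blast
      hence "\<not> qprox_of \<U> C (X - V `` C)" using V(1) unfolding qprox_of_def by blast
      moreover have "C \<subseteq> X" using \<C>(2) that by blast
      ultimately show ?thesis using induces by blast
    qed
    thus ?thesis using \<C>(1,2) by (auto simp: far_pairs_def G_def)
  qed
  moreover have "off_rects X G \<subseteq> U"
  proof
    fix p assume p: "p \<in> off_rects X G"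
    then obtain x y where xy: "p = (x, y)" "x \<in> X" "y \<in> X" using off_rects_subset by blast
    then obtain C where C: "C \<in> \<C>" "x \<in> C" using \<C>(2) by blast
    have "(C, X - V `` C) \<in> G" using C(1) by (simp add: G_def)
    hence "y \<in> V `` C" using off_rects_notin_rect p xy C(2) by fastforce
    then obtain a where "a \<in> C" "(a, y) \<in> V" by blast
    moreover have "(x, a) \<in> V" using \<C>(3) C \<open>a \<in> C\<close> by blast
    ultimately show "p \<in> U" using V(2) xy(1) by blast
  qed
  moreover have "U \<subseteq> X \<times> X" using qu_subset[OF qu \<open>U \<in> \<U>\<close>] .
  ultimately show "U \<in> qu_of_qprox X \<delta>" by (rule qu_of_qproxI)
qed

definition qu_join :: "'a set \<Rightarrow> ('a \<times> 'a) set set \<Rightarrow> ('a \<times> 'a) set set \<Rightarrow> ('a \<times> 'a) set set" where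
  "qu_join X \<U> \<V> = {Z. Z \<subseteq> X \<times> X \<and> (\<exists>U\<in>\<U>. \<exists>V\<in>\<V>. U \<inter> V \<subseteq> Z)}"

lemma qu_joinI:
  "U \<in> \<U> \<Longrightarrow> V \<in> \<V> \<Longrightarrow> U \<inter> V \<subseteq> Z \<Longrightarrow> Z \<subseteq> X \<times> X \<Longrightarrow> Z \<in> qu_join X \<U> \<V>"
  unfolding qu_join_def by blast

lemma qu_joinE:
  assumes "Z \<in> qu_join X \<U> \<V>"
  obtains U V where "U \<in> \<U>" "V \<in> \<V>" "U \<inter> V \<subseteq> Z" "Z \<subseteq> X \<times> X"
  using assms unfolding qu_join_def by blast

lemma qu_join_Int:
  assumes "quasi_uniformity X \<U>" "U \<in> \<U>" "V \<in> \<V>"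
  shows "U \<inter> V \<in> qu_join X \<U> \<V>"
  using qu_subset[OF assms(1,2)] by (blast intro: qu_joinI[OF assms(2,3)])

lemma quasi_uniformity_qu_join:
  assumes qu: "quasi_uniformity X \<U>" and qv: "quasi_uniformity X \<V>"
  shows "quasi_uniformity X (qu_join X \<U> \<V>)"
  unfolding quasi_uniformity_def
proof (intro conjI ballI allI impI)
  show "qu_join X \<U> \<V> \<noteq> {}" using qu_join_Int[OF qu qu_Times[OF qu] qu_Times[OF qv]] by blast
next
  fix Z assume "Z \<in> qu_join X \<U> \<V>"
  then obtain U V where UV: "U \<in> \<U>" "V \<in> \<V>" "U \<inter> V \<subseteq> Z" "Z \<subseteq> X \<times> X"
    by (rule qu_joinE)
  thus "Z \<subseteq> X \<times> X" "Id_on X \<subseteq> Z" using qu_Id_on[OF qu UV(1)] qu_Id_on[OF qv UV(2)] by auto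
  fix Z' assume "Z \<subseteq> Z' \<and> Z' \<subseteq> X \<times> X"
  thus "Z' \<in> qu_join X \<U> \<V>" using qu_joinI[OF UV(1,2)] UV(3) by blast
next
  fix Z assume "Z \<in> qu_join X \<U> \<V>"
  then obtain U V where UV: "U \<in> \<U>" "V \<in> \<V>" "U \<inter> V \<subseteq> Z" by (rule qu_joinE)
  obtain U' V' where U': "U' \<in> \<U>" "U' O U' \<subseteq> U" and V': "V' \<in> \<V>" "V' O V' \<subseteq> V"
    using qu_comp[OF qu UV(1)] qu_comp[OF qv UV(2)] by blast
  have "(U' \<inter> V') O (U' \<inter> V') \<subseteq> Z" using U'(2) V'(2) UV(3) by blast
  thus "\<exists>W\<in>qu_join X \<U> \<V>. W O W \<subseteq> Z" using qu_join_Int[OF qu U'(1) V'(1)] by blast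
next
  fix Z Z' assume "Z \<in> qu_join X \<U> \<V>" "Z' \<in> qu_join X \<U> \<V>"
  then obtain U V U' V' where "U \<in> \<U>" "V \<in> \<V>" "U \<inter> V \<subseteq> Z" "Z \<subseteq> X \<times> X"
    and "U' \<in> \<U>" "V' \<in> \<V>" "U' \<inter> V' \<subseteq> Z'"
    by (metis qu_joinE)
  moreover have "(U \<inter> U') \<inter> (V \<inter> V') \<subseteq> Z \<inter> Z'" using calculation by blast
  ultimately show "Z \<inter> Z' \<in> qu_join X \<U> \<V>"
    using qu_joinI[OF qu_Int[OF qu] qu_Int[OF qv]] by blast
qed

lemma qu_join_upper1:
  assumes "quasi_uniformity X \<U>" "quasi_uniformity X \<V>"
  shows "\<U> \<subseteq> qu_join X \<U> \<V>"
proof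
  fix U assume "U \<in> \<U>"
  thus "U \<in> qu_join X \<U> \<V>"
    using qu_joinI[OF _ qu_Times[OF assms(2)]] qu_subset[OF assms(1)] by blast
qed

lemma qu_join_upper2:
  assumes "quasi_uniformity X \<U>" "quasi_uniformity X \<V>"
  shows "\<V> \<subseteq> qu_join X \<U> \<V>"
proof
  fix V assume "V \<in> \<V>"
  thus "V \<in> qu_join X \<U> \<V>"
    using qu_joinI[OF qu_Times[OF assms(1)]] qu_subset[OF assms(2)] by blast
qed

lemma qu_transitive_qu_join:
  assumes qu: "quasi_uniformity X \<U>" and "qu_transitive \<U>" "qu_transitive \<V>"
  shows "qu_transitive (qu_join X \<U> \<V>)"
  unfolding qu_transitive_def
proof
  fix Z assume "Z \<in> qu_join X \<U> \<V>"
  then obtain U V where UV: "U \<in> \<U>" "V \<in> \<V>" "U \<inter> V \<subseteq> Z" by (rule qu_joinE)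
  obtain U' V' where U': "U' \<in> \<U>" "U' \<subseteq> U" "trans U'" and V': "V' \<in> \<V>" "V' \<subseteq> V" "trans V'"
    using assms(2,3) UV(1,2) unfolding qu_transitive_def by meson
  have "U' \<inter> V' \<subseteq> Z" using U'(2) V'(2) UV(3) by blast
  thus "\<exists>W\<in>qu_join X \<U> \<V>. W \<subseteq> Z \<and> trans W"
    using qu_join_Int[OF qu U'(1) V'(1)] trans_Int[OF U'(3) V'(3)] by blast
qed

text \<open>Every entourage of the join contains some U \<inter> off_rects X F, which meets every
  \<delta>2-near rectangle by near_meets_Int_off_rects.\<close>
lemma qu_join_qu_of_qprox_in_qu_class:
  assumes qp2: "quasi_proximity X \<delta>2" and \<U>: "\<U> \<in> qu_class X \<delta>1"
    and coarser: "\<And>A B. A \<subseteq> X \<Longrightarrow> B \<subseteq> X \<Longrightarrow> \<delta>2 A B \<Longrightarrow> \<delta>1 A B"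
  shows "qu_join X \<U> (qu_of_qprox X \<delta>2) \<in> qu_class X \<delta>2"
proof -
  let ?\<W> = "qu_join X \<U> (qu_of_qprox X \<delta>2)"
  note qu = qu_classD(1)[OF \<U>] and induces = qu_classD(2)[OF \<U>]
  note quV = qu_classD(1)[OF qu_of_qprox_in_qu_class[OF qp2]]
    and inducesV = qu_classD(2)[OF qu_of_qprox_in_qu_class[OF qp2]]
  have "qprox_of ?\<W> A B \<longleftrightarrow> \<delta>2 A B" if AB: "A \<subseteq> X" "B \<subseteq> X" for A B
  proof
    assume "qprox_of ?\<W> A B"
    thus "\<delta>2 A B"
      using qprox_of_antimono[OF qu_join_upper2[OF qu quV]] inducesV[OF AB] by blast
  next
    assume near: "\<delta>2 A B"
    show "qprox_of ?\<W> A B"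
      unfolding qprox_of_def
    proof
      fix Z assume "Z \<in> ?\<W>"
      then obtain U V where UV: "U \<in> \<U>" "V \<in> qu_of_qprox X \<delta>2" "U \<inter> V \<subseteq> Z"
        by (rule qu_joinE)
      obtain F where F: "far_pairs X \<delta>2 F" "off_rects X F \<subseteq> V"
        using UV(2) by (rule qu_of_qproxE)
      have "(A' \<times> B') \<inter> U \<noteq> {}" if "A' \<subseteq> X" "B' \<subseteq> X" "\<delta>2 A' B'" for A' B'
        using induces[OF that(1,2)] coarser[OF that] UV(1) unfolding qprox_of_def by blast
      hence "(A \<times> B) \<inter> (U \<inter> off_rects X F) \<noteq> {}"
        using near_meets_Int_off_rects[OF qp2 F(1) _ AB near] by blast
      thus "(A \<times> B) \<inter> Z \<noteq> {}" using F(2) UV(3) by blast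
    qed
  qed
  thus ?thesis using quasi_uniformity_qu_join[OF qu quV] by (simp add: qu_class_def)
qed

lemma qu_compatible_if_qp_compatible:
  assumes \<W>: "\<W> \<in> qu_class (topspace \<tau>) \<delta>" and qc: "qp_compatible \<tau> \<delta>"
  shows "qu_compatible \<tau> \<W>"
  unfolding qu_compatible_def
proof
  fix G
  let ?X = "topspace \<tau>"
  note qu = qu_classD(1)[OF \<W>] and induces = qu_classD(2)[OF \<W>]
  show "openin \<tau> G \<longleftrightarrow> G \<subseteq> ?X \<and> (\<forall>x\<in>G. \<exists>U\<in>\<W>. U `` {x} \<subseteq> G)"
  proof (cases "G \<subseteq> ?X")
    case False
    hence "\<not> openin \<tau> G" using openin_subset by blast
    thus ?thesis using False by simp
  next
    case True
    have "\<not> \<delta> {x} (?X - G) \<longleftrightarrow> (\<exists>U\<in>\<W>. U `` {x} \<subseteq> G)" if "x \<in> G" for x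
    proof -
      have "{x} \<subseteq> ?X" using that True by blast
      hence "\<not> \<delta> {x} (?X - G) \<longleftrightarrow> \<not> qprox_of \<W> {x} (?X - G)"
        using induces[of "{x}" "?X - G"] by blast
      also have "\<dots> \<longleftrightarrow> (\<exists>U\<in>\<W>. ({x} \<times> (?X - G)) \<inter> U = {})"
        unfolding qprox_of_def by blast
      also have "\<dots> \<longleftrightarrow> (\<exists>U\<in>\<W>. U `` {x} \<subseteq> G)"
      proof -
        have "({x} \<times> (?X - G)) \<inter> U = {} \<longleftrightarrow> U `` {x} \<subseteq> G" if "U \<in> \<W>" for U
          using qu_subset[OF qu that] by blast
        thus ?thesis by blast
      qed
      finally show ?thesis .
    qed
    moreover have "openin \<tau> G \<longleftrightarrow> \<tau> closure_of (?X - G) \<subseteq> ?X - G"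
      using True by (metis Diff_subset closure_of_subset_eq openin_closedin_eq)
    moreover have "\<tau> closure_of (?X - G) = {x \<in> ?X. \<delta> {x} (?X - G)}"
      using qc unfolding qp_compatible_def by blast
    ultimately show ?thesis using True by blast
  qed
qed

lemma trans_qusI:
  "\<U> \<in> qu_class (topspace \<tau>) \<delta> \<Longrightarrow> qp_compatible \<tau> \<delta> \<Longrightarrow> qu_transitive \<U> \<Longrightarrow> \<U> \<in> trans_qus \<tau>"
  unfolding trans_qus_def using qu_classD(1) qu_compatible_if_qp_compatible by blast

theorem corollary2p7:
  fixes \<tau> :: "'a topology" and \<delta>1 \<delta>2 :: "'a set \<Rightarrow> 'a set \<Rightarrow> bool"
  assumes "quasi_proximity (topspace \<tau>) \<delta>1" and "qp_compatible \<tau> \<delta>1"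
    and "quasi_proximity (topspace \<tau>) \<delta>2" and "qp_compatible \<tau> \<delta>2"
    and "qp_coarser (topspace \<tau>) \<delta>1 \<delta>2"
    and "qu_transitive (coarsest_qu (topspace \<tau>) \<delta>1)"
    and "qu_transitive (coarsest_qu (topspace \<tau>) \<delta>2)"
    and "\<exists>\<U>\<in>qu_class (topspace \<tau>) \<delta>1 \<inter> trans_qus \<tau>.
           \<exists>\<V>\<in>qu_class (topspace \<tau>) \<delta>1 \<inter> trans_qus \<tau>. \<U> \<noteq> \<V>"
  shows "\<exists>\<U>\<in>qu_class (topspace \<tau>) \<delta>2 \<inter> trans_qus \<tau>.
           \<exists>\<V>\<in>qu_class (topspace \<tau>) \<delta>2 \<inter> trans_qus \<tau>. \<U> \<noteq> \<V>"
proof -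
  let ?X = "topspace \<tau>" and ?V1 = "qu_of_qprox (topspace \<tau>) \<delta>1"
    and ?V2 = "qu_of_qprox (topspace \<tau>) \<delta>2"
  obtain \<U>1 \<U>2 where \<U>1: "\<U>1 \<in> qu_class ?X \<delta>1" "\<U>1 \<in> trans_qus \<tau>"
    and \<U>2: "\<U>2 \<in> qu_class ?X \<delta>1" "\<U>2 \<in> trans_qus \<tau>" and "\<U>1 \<noteq> \<U>2"
    using assms(8) by blast
  moreover have "?V1 \<subseteq> \<U>1" "?V1 \<subseteq> \<U>2" using \<U>1(1) \<U>2(1) by (simp_all add: qu_of_qprox_le)
  ultimately obtain \<U> where \<U>: "\<U> \<in> qu_class ?X \<delta>1" "\<U> \<in> trans_qus \<tau>"
    and finer: "\<not> \<U> \<subseteq> ?V1"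
    by blast
  note quU = qu_classD(1)[OF \<U>(1)]
  have trU: "qu_transitive \<U>" using \<U>(2) by (simp add: trans_qus_def)
  have V2: "?V2 \<in> qu_class ?X \<delta>2" using qu_of_qprox_in_qu_class[OF assms(3)] .
  note quV2 = qu_classD(1)[OF V2]
  have trV2: "qu_transitive ?V2" using assms(7) coarsest_qu_eq[OF assms(3)] by simp
  define \<W> where "\<W> = qu_join ?X \<U> ?V2"
  have W: "\<W> \<in> qu_class ?X \<delta>2"
    using qu_join_qu_of_qprox_in_qu_class[OF assms(3) \<U>(1)] assms(5)
    unfolding \<W>_def qp_coarser_def by blast
  have "\<W> \<in> trans_qus \<tau>" "?V2 \<in> trans_qus \<tau>"
    using trans_qusI[OF W assms(4)] trans_qusI[OF V2 assms(4) trV2]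
      qu_transitive_qu_join[OF quU trU trV2] unfolding \<W>_def by blast+
  moreover have "\<W> \<noteq> ?V2"
  proof
    assume "\<W> = ?V2"
    hence "\<U> \<subseteq> ?V2" using qu_join_upper1[OF quU quV2] unfolding \<W>_def by simp
    thus False
      using totally_bounded_le_qu_of_qprox[OF \<U>(1) totally_bounded_qu_subset
          [OF _ qu_of_qprox_totally_bounded[OF assms(3)]]] finer by blast
  qed
  ultimately show ?thesis using W V2 by blast
qed

end
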